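(* Let $\varphi(x)=\sum_{i\ge0}\gamma_ix^i\in\mathbb{K}[[x]]$ and let $k\ge0$ be an integer. Then $$\sum_{i=0}^m(-1)^i\binom{2m+2k-1}{m-i}\binom{m+i}{i}\gamma_{m+i-1}=0$$ for each $m\ge1$ if and only if there is a power series $\psi(y)\in\mathbb{K}[[y]]$ such that $$\sum_{i\ge0}\gamma_ix^i=\frac1x\cdot\frac{d^{2k-1}}{dx^{2k-1}}\left[\frac{x^{2k}}{1-x}\,\psi\!\left(\frac{x^2}{1-x}\right)\right],$$ where for $k=0$ the operator $\frac{d^{-1}}{dx^{-1}}$ means formal term-by-term integration with vanishing constant of integration. If $k\ge1$, this last condition is equivalent to the existence of $\rho(y)\in\mathbb{K}[[y]]$ with $$\sum_{i\ge0}\gamma_ix^i=\frac1x\cdot\frac{d^{2k-1}}{dx^{2k-1}}\left[x^{2k-2}\rho\!\left(\frac{x^2}{1-x}\right)\right].$$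
   Context: $\mathbb{K}\in\{\mathbb{Q},\mathbb{R},\mathbb{C}\}$. All operations (composition, differentiation, integration) are formal operations on formal power series. *)

theory Defs
  imports "HOL-Computational_Algebra.Formal_Power_Series"
begin

text \<open>Only j = 2k-1 >= -1 is used.\<close>
definition fps_diff_int :: "int \<Rightarrow> 'a::field_char_0 fps \<Rightarrow> 'a fps" where
  "fps_diff_int j f =
     (if 0 \<le> j then (fps_deriv ^^ nat j) f
      else ((\<lambda>g. fps_integral g 0) ^^ nat (- j)) f)"

end

theory Submission imports Defs begin

text \<open>Write y = x^2/(1-x). Since y^j/(1-x) has x^p-coefficient C(p-j,j), the series built
  from \<psi> has coefficients \<phi>_p = (p+2k)!/(p+1)! * h_p with h_p = \<Sum>_j \<psi>_j C(p-j,j).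
  Substituting this, the binomial weights of the m-th condition collapse to a constant times
  (-1)^i C(m,i), so the condition says that the m-th finite difference of i \<mapsto> h_(m+i-1)
  vanishes; it does, because on 0 \<le> i \<le> m each C(m+i-1-j,j) is either a polynomial in i of
  degree j < m or identically zero.

  Conversely, \<psi> \<mapsto> (h_2j)_j is triangular with unit diagonal, so \<psi> can be chosen to match
  \<phi> at all even indices. The difference of \<phi> and the series built from \<psi> satisfies the same
  conditions, and the m-th one determines its coefficient 2m-1 from lower ones (the factor
  (-1)^m C(2m,m) is nonzero), so the difference vanishes.

  Finally x^2k \<psi>(y)/(1-x) = x^(2k-2) (y\<psi>)(y); conversely the constant term of \<rho> only
  contributes \<rho>_0 x^(2k-2), which the (2k-1)-fold derivative kills.\<close>

unbundle fps_syntax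

abbreviation fps_Y :: "'a::field fps" where
  "fps_Y \<equiv> fps_X ^ 2 / (1 - fps_X)"

abbreviation psi_transform :: "nat \<Rightarrow> 'a::field_char_0 fps \<Rightarrow> 'a fps" where
  "psi_transform k psi \<equiv>
     fps_diff_int (2 * int k - 1) (fps_X ^ (2*k) / (1 - fps_X) * fps_compose psi fps_Y) / fps_X"

abbreviation rho_transform :: "nat \<Rightarrow> 'a::field_char_0 fps \<Rightarrow> 'a fps" where
  "rho_transform k rho \<equiv>
     fps_diff_int (2 * int k - 1) (fps_X ^ (2*k-2) * fps_compose rho fps_Y) / fps_X"

abbreviation binomial_constraint :: "nat \<Rightarrow> (nat \<Rightarrow> 'a::comm_ring_1) \<Rightarrow> nat \<Rightarrow> 'a" where
  "binomial_constraint k a m \<equiv>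
     \<Sum>i=0..m. (-1)^i * of_nat ((2*m+2*k-1) choose (m-i)) * of_nat ((m+i) choose i) * a (m+i-1)"

lemma fps_nth_deriv_funpow:
  fixes f :: "'a::{comm_semiring_1,semiring_char_0} fps"
  shows "(fps_deriv ^^ r) f $ n * fact n = fact (n + r) * f $ (n + r)"
proof (induction r arbitrary: n)
  case (Suc r)
  have "(fps_deriv ^^ Suc r) f $ n * fact n = (fps_deriv ^^ r) f $ (n + 1) * fact (n + 1)"
    by (simp add: algebra_simps)
  also have "\<dots> = fact (n + Suc r) * f $ (n + Suc r)"
    using Suc.IH[of "n + 1"] by simp
  finally show ?case .
qed (simp add: mult.commute)

lemma fps_nth_diff_int_div_X:
  fixes F :: "'a::field_char_0 fps"
  shows "(fps_diff_int (int r - 1) F / fps_X) $ p * fact (p + 1) = fact (p + r) * F $ (p + r)"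
proof (cases r)
  case 0
  have "(1 + of_nat p :: 'a) \<noteq> 0"
    using of_nat_neq_0[of p] by (simp add: add.commute)
  with 0 show ?thesis by (simp add: fps_diff_int_def field_simps)
next
  case (Suc s)
  then show ?thesis
    using fps_nth_deriv_funpow[of s F "p + 1"] by (simp add: fps_diff_int_def)
qed

lemma fps_diff_int_div_X_cong:
  fixes F G :: "'a::field_char_0 fps"
  assumes "\<And>n. n \<ge> r \<Longrightarrow> F $ n = G $ n"
  shows "fps_diff_int (int r - 1) F / fps_X = fps_diff_int (int r - 1) G / fps_X"
proof (rule fps_ext)
  fix p
  have "(fps_diff_int (int r - 1) F / fps_X) $ p * fact (p + 1)
      = (fps_diff_int (int r - 1) G / fps_X) $ p * fact (p + 1)"
    unfolding fps_nth_diff_int_div_X using assms by simp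
  then show "(fps_diff_int (int r - 1) F / fps_X) $ p = (fps_diff_int (int r - 1) G / fps_X) $ p"
    by (metis fact_nonzero mult_cancel_right)
qed

lemma fps_nth_inverse_1_minus_X_mult:
  fixes F :: "'a::field fps"
  shows "(inverse (1 - fps_X) * F) $ n = (\<Sum>l=0..n. F $ l)"
  by (simp add: fps_inverse_one_minus_fps_X fps_mult_nth sum.atLeastAtMost_rev[of "\<lambda>l. F $ l"])

lemma sum_diff_choose: "(\<Sum>l=0..M. (l - j) choose j) = (M + 1 - j) choose (j + 1)"
proof (induction M)
  case 0
  then show ?case by (cases j) auto
next
  case (Suc M)
  then show ?case
    by (cases "j \<le> M + 1") (simp_all add: Suc_diff_le)
qed

lemma fps_nth_inverse_1_minus_X_mult_power_Y:
  "(inverse (1 - fps_X) * fps_Y ^ j :: 'a::field fps) $ n = of_nat ((n - j) choose j)"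
proof (induction j arbitrary: n)
  case 0
  then show ?case by (simp add: fps_inverse_one_minus_fps_X)
next
  case (Suc j)
  let ?A = "inverse (1 - fps_X) :: 'a fps"
  have "fps_Y = fps_X ^ 2 * ?A"
    by (simp add: fps_divide_unit)
  then have "?A * fps_Y ^ Suc j = fps_X ^ 2 * (?A * (?A * fps_Y ^ j))"
    by (simp only: power_Suc mult_ac)
  then have "(?A * fps_Y ^ Suc j) $ n = (if n < 2 then 0 else (?A * (?A * fps_Y ^ j)) $ (n - 2))"
    by (simp only: fps_X_power_mult_nth)
  also have "\<dots> = (if n < 2 then 0 else \<Sum>l=0..n-2. of_nat ((l - j) choose j))"
    by (subst fps_nth_inverse_1_minus_X_mult) (simp add: Suc.IH)
  also have "\<dots> = of_nat ((n - Suc j) choose Suc j)"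
    by (simp flip: of_nat_sum add: sum_diff_choose Suc_diff_le)
  finally show ?case .
qed

lemma fps_nth_mult_compose:
  fixes a b c :: "'a::comm_ring_1 fps"
  assumes b0: "b $ 0 = 0"
  shows "(c * (a oo b)) $ n = (\<Sum>i=0..n. a $ i * (c * b ^ i) $ n)"
proof -
  have compose_nth: "(a oo b) $ l = (\<Sum>i=0..n. a $ i * (b ^ i) $ l)" if "l \<le> n" for l
  proof -
    have "(b ^ i) $ l = 0" if "l < i" for i
      using startsby_zero_power_prefix[OF b0] that by blast
    then show ?thesis
      unfolding fps_compose_nth using \<open>l \<le> n\<close> by (intro sum.mono_neutral_left) auto
  qed
  have "(c * (a oo b)) $ n = (\<Sum>l=0..n. (\<Sum>i=0..n. a $ i * (b ^ i) $ l) * c $ (n - l))"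
    by (simp add: fps_mult_nth mult.commute[of c] compose_nth)
  also have "\<dots> = (\<Sum>i=0..n. a $ i * (\<Sum>l=0..n. (b ^ i) $ l * c $ (n - l)))"
    unfolding sum_distrib_left sum_distrib_right mult.assoc by (rule sum.swap)
  also have "\<dots> = (\<Sum>i=0..n. a $ i * (c * b ^ i) $ n)"
    by (simp add: fps_mult_nth mult.commute[of c])
  finally show ?thesis .
qed

text \<open>The x^p-coefficient of \<psi>(y)/(1-x), i.e. h_p.\<close>

definition diag_transform :: "'a::semiring_1 fps \<Rightarrow> nat \<Rightarrow> 'a" where
  "diag_transform psi p = (\<Sum>j=0..p. psi $ j * of_nat ((p - j) choose j))"

lemma fps_nth_psi_transform:
  fixes psi :: "'a::field_char_0 fps"
  shows "(psi_transform k psi) $ p * fact (p + 1) = fact (p + 2*k) * diag_transform psi p"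
proof -
  let ?A = "inverse (1 - fps_X) :: 'a fps"
  have "fps_X ^ (2*k) / (1 - fps_X) * (psi oo fps_Y) = fps_X ^ (2*k) * (?A * (psi oo fps_Y))"
    by (simp add: fps_divide_unit mult_ac)
  then have "(fps_X ^ (2*k) / (1 - fps_X) * (psi oo fps_Y)) $ (p + 2*k) = (?A * (psi oo fps_Y)) $ p"
    by (simp only: fps_X_power_mult_nth) simp
  also have "\<dots> = diag_transform psi p"
  proof -
    have "fps_Y $ 0 = (0 :: 'a)"
      by (simp add: fps_divide_unit)
    then show ?thesis
      by (simp only: fps_nth_mult_compose fps_nth_inverse_1_minus_X_mult_power_Y diag_transform_def)
  qed
  moreover have "int (2*k) - 1 = 2 * int k - 1"
    by simp
  ultimately show ?thesis
    using fps_nth_diff_int_div_X[of "2*k" _ p] by metis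
qed

lemma alternating_binomial_sum_Suc:
  fixes q :: "nat \<Rightarrow> 'a::comm_ring_1"
  shows "(\<Sum>i\<le>Suc m. (-1)^i * of_nat (Suc m choose i) * q i)
       = - (\<Sum>i\<le>m. (-1)^i * of_nat (m choose i) * (q (Suc i) - q i))"
proof -
  let ?S = "\<lambda>f. \<Sum>i\<le>m. (-1)^Suc i * of_nat (m choose f i) * q (Suc i)"
  have "(\<Sum>i\<le>Suc m. (-1)^i * of_nat (Suc m choose i) * q i) = ?S id + (q 0 + ?S Suc)"
    by (simp add: sum.atMost_Suc_shift sum.distrib sum_subtractf sum_negf algebra_simps
        del: sum.atMost_Suc)
  also have "q 0 + ?S Suc = (\<Sum>i\<le>Suc m. (-1)^i * of_nat (m choose i) * q i)"
    by (simp add: sum.atMost_Suc_shift del: sum.atMost_Suc)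
  also have "\<dots> = (\<Sum>i\<le>m. (-1)^i * of_nat (m choose i) * q i)"
    by (simp add: binomial_eq_0)
  also have "?S id + \<dots> = - (\<Sum>i\<le>m. (-1)^i * of_nat (m choose i) * (q (Suc i) - q i))"
    by (simp add: sum_negf[symmetric] sum.distrib[symmetric] algebra_simps del: sum.atMost_Suc)
  finally show ?thesis .
qed

lemma alternating_binomial_sum_choose:
  assumes "j < m"
  shows "(\<Sum>i\<le>m. (-1)^i * of_nat (m choose i) * of_nat ((i + a) choose j)) = (0::'a::comm_ring_1)"
  using assms
proof (induction m arbitrary: j a)
  case (Suc m)
  show ?case
  proof (cases j)
    case 0
    then show ?thesis
      using choose_alternating_sum[of "Suc m"] by simp
  next
    case (Suc j')
    have "(\<Sum>i\<le>Suc m. (-1)^i * of_nat (Suc m choose i) * (of_nat ((i + a) choose j) :: 'a))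
        = - (\<Sum>i\<le>m. (-1)^i * of_nat (m choose i) * of_nat ((i + a) choose j'))"
      unfolding alternating_binomial_sum_Suc by (simp add: Suc)
    also have "\<dots> = 0"
      using Suc.IH[of j' a] Suc.prems Suc by simp
    finally show ?thesis .
  qed
qed simp

lemma alternating_binomial_sum_diag_choose:
  assumes "m \<ge> 1"
  shows "(\<Sum>i=0..m. (-1)^i * of_nat (m choose i) * of_nat ((m + i - 1 - j) choose j)) = (0::'a::comm_ring_1)"
proof (cases "j < m")
  case True
  have "(\<Sum>i=0..m. (-1)^i * of_nat (m choose i) * of_nat ((m + i - 1 - j) choose j))
      = (\<Sum>i\<le>m. (-1)^i * of_nat (m choose i) * (of_nat ((i + (m - 1 - j)) choose j) :: 'a))"
    unfolding atLeast0AtMost using True by (intro sum.cong) (auto simp: add.commute)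
  also have "\<dots> = 0"
    using True by (rule alternating_binomial_sum_choose)
  finally show ?thesis .
next
  case False
  then show ?thesis
    using assms by (intro sum.neutral ballI) (auto simp: binomial_eq_0)
qed

lemma diag_transform_eq_sum_upto:
  assumes "p \<le> B"
  shows "diag_transform psi p = (\<Sum>j=0..B. psi $ j * of_nat ((p - j) choose j))"
  unfolding diag_transform_def using assms
  by (intro sum.mono_neutral_left) (auto simp: binomial_eq_0)

lemma alternating_binomial_sum_diag_transform:
  fixes psi :: "'a::comm_ring_1 fps"
  assumes m: "m \<ge> 1"
  shows "(\<Sum>i=0..m. (-1)^i * of_nat (m choose i) * diag_transform psi (m + i - 1)) = 0"
proof -
  have "(\<Sum>i=0..m. (-1)^i * of_nat (m choose i) * diag_transform psi (m + i - 1))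
     = (\<Sum>i=0..m. (-1)^i * of_nat (m choose i) *
          (\<Sum>j=0..2*m. psi $ j * of_nat ((m + i - 1 - j) choose j)))"
    by (intro sum.cong refl, subst diag_transform_eq_sum_upto[of _ "2*m"]) auto
  also have "\<dots> = (\<Sum>j=0..2*m. psi $ j *
          (\<Sum>i=0..m. (-1)^i * of_nat (m choose i) * of_nat ((m + i - 1 - j) choose j)))"
    unfolding sum_distrib_left by (subst sum.swap) (simp add: mult_ac)
  also have "\<dots> = 0"
    by (simp only: alternating_binomial_sum_diag_choose[OF m] mult_zero_right sum.neutral_const)
  finally show ?thesis .
qed

lemma binomial_constraint_rescale:
  fixes a h :: "nat \<Rightarrow> 'a::field_char_0"
  assumes a: "\<And>p. a p * fact (p + 1) = fact (p + 2*k) * h p" and m: "m \<ge> 1"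
  shows "binomial_constraint k a m
       = fact (2*m+2*k-1) / (fact m * fact m) * (\<Sum>i=0..m. (-1)^i * of_nat (m choose i) * h (m+i-1))"
proof -
  have "of_nat ((2*m+2*k-1) choose (m-i)) * of_nat ((m+i) choose i) * a (m+i-1)
      = fact (2*m+2*k-1) / (fact m * fact m) * (of_nat (m choose i) * h (m+i-1))"
    if i: "i \<le> m" for i
  proof -
    have a_eq: "a (m+i-1) = fact (m+i-1+2*k) * h (m+i-1) / fact (m+i)"
      using a[of "m+i-1"] m by (simp add: field_simps)
    have choose1: "(of_nat ((2*m+2*k-1) choose (m-i)) :: 'a)
        = fact (2*m+2*k-1) / (fact (m-i) * fact (m+i-1+2*k))"
    proof -
      have "2*m+2*k-1 - (m-i) = m+i-1+2*k"
        using m i by simp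
      then show ?thesis
        using binomial_fact[of "m-i" "2*m+2*k-1"] m by fastforce
    qed
    have choose2: "(of_nat ((m+i) choose i) :: 'a) = fact (m+i) / (fact i * fact m)"
      using binomial_fact[of i "m+i"] by simp
    have choose3: "(of_nat (m choose i) :: 'a) = fact m / (fact i * fact (m-i))"
      using binomial_fact[of i m] i by simp
    show ?thesis
      unfolding a_eq choose1 choose2 choose3 by (simp add: field_simps)
  qed
  then show ?thesis
    by (simp add: sum_distrib_left mult_ac)
qed

lemma psi_transform_satisfies_constraint:
  fixes psi :: "'a::field_char_0 fps"
  assumes "m \<ge> 1"
  shows "binomial_constraint k (fps_nth (psi_transform k psi)) m = 0"
  using binomial_constraint_rescale[where a = "fps_nth (psi_transform k psi)" and h = "diag_transform psi",
      OF fps_nth_psi_transform assms]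
    alternating_binomial_sum_diag_transform[OF assms] by simp

fun diag_even_inverse :: "(nat \<Rightarrow> 'a::comm_ring_1) \<Rightarrow> nat \<Rightarrow> 'a" where
  "diag_even_inverse t j = t j - (\<Sum>l<j. diag_even_inverse t l * of_nat ((2*j - l) choose l))"

declare diag_even_inverse.simps [simp del]

lemma diag_transform_even_inverse:
  "diag_transform (Abs_fps (diag_even_inverse t)) (2*j) = t j"
proof -
  let ?f = "\<lambda>l. diag_even_inverse t l * of_nat ((2*j - l) choose l)"
  have "diag_transform (Abs_fps (diag_even_inverse t)) (2*j) = (\<Sum>l=0..2*j. ?f l)"
    by (simp add: diag_transform_def)
  also have "\<dots> = (\<Sum>l<Suc j. ?f l)"
  proof (rule sum.mono_neutral_right)
    show "\<forall>l\<in>{0..2*j} - {..<Suc j}. ?f l = 0"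
    proof
      fix l
      assume "l \<in> {0..2*j} - {..<Suc j}"
      then have "2*j - l < l"
        by auto
      then show "?f l = 0"
        by (simp add: binomial_eq_0)
    qed
  qed auto
  also have "\<dots> = diag_even_inverse t j + (\<Sum>l<j. ?f l)"
    by simp
  also have "\<dots> = t j"
    by (subst (1) diag_even_inverse.simps) simp
  finally show ?thesis .
qed

lemma binomial_constraint_diff:
  "binomial_constraint k (\<lambda>n. a n - b n) m = binomial_constraint k a m - binomial_constraint k b m"
  by (simp add: right_diff_distrib sum_subtractf)

lemma binomial_constraint_determined_by_even:
  fixes d :: "nat \<Rightarrow> 'a::field_char_0"
  assumes constraint: "\<And>m. m \<ge> 1 \<Longrightarrow> binomial_constraint k d m = 0"
    and even: "\<And>j. d (2*j) = 0"
  shows "d n = 0"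
proof (induction n rule: less_induct)
  case (less p)
  show ?case
  proof (cases "even p")
    case True
    then show ?thesis
      using even by (auto elim: evenE)
  next
    case False
    define m where "m = (p + 1) div 2"
    have m: "m \<ge> 1" "p = 2*m - 1"
      using False by (auto simp: m_def elim!: oddE)
    let ?c = "\<lambda>i. (-1)^i * of_nat ((2*m+2*k-1) choose (m-i)) * of_nat ((m+i) choose i) :: 'a"
    have "(\<Sum>i=0..m. ?c i * d (m+i-1)) = (\<Sum>i<m. ?c i * d (m+i-1)) + ?c m * d (m+m-1)"
      by (simp add: atLeast0AtMost lessThan_Suc_atMost[symmetric])
    also have "(\<Sum>i<m. ?c i * d (m+i-1)) = 0"
      using less.IH m by (intro sum.neutral ballI) simp
    finally have "?c m * d p = 0"
      using constraint[OF \<open>m \<ge> 1\<close>] m by (simp add: mult_2)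
    then show ?thesis
      by simp
  qed
qed

lemma binomial_constraint_imp_psi_transform:
  fixes phi :: "'a::field_char_0 fps"
  assumes constraint: "\<forall>m. m \<ge> 1 \<longrightarrow> binomial_constraint k (fps_nth phi) m = 0"
  shows "\<exists>psi. phi = psi_transform k psi"
proof
  define psi where
    "psi = Abs_fps (diag_even_inverse (\<lambda>j. phi $ (2*j) * fact (2*j+1) / fact (2*j+2*k)))"
  have "phi $ n - psi_transform k psi $ n = 0" for n
  proof (rule binomial_constraint_determined_by_even)
    show "binomial_constraint k (\<lambda>n. phi $ n - psi_transform k psi $ n) m = 0" if "m \<ge> 1" for m
    proof -
      have "binomial_constraint k (fps_nth phi) m = 0"
        using constraint that by blast
      moreover have "binomial_constraint k (fps_nth (psi_transform k psi)) m = 0"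
        using that by (rule psi_transform_satisfies_constraint)
      ultimately show ?thesis
        by (simp only: binomial_constraint_diff diff_zero)
    qed
    show "phi $ (2*j) - psi_transform k psi $ (2*j) = 0" for j
    proof -
      have "psi_transform k psi $ (2*j) * fact (2*j+1) = phi $ (2*j) * fact (2*j+1)"
        unfolding fps_nth_psi_transform psi_def diag_transform_even_inverse by simp
      then show ?thesis
        by (metis fact_nonzero mult_cancel_right right_minus_eq)
    qed
  qed
  then show "phi = psi_transform k psi"
    by (simp add: fps_eq_iff)
qed

lemma power_X_mult_compose_Y:
  fixes psi :: "'a::field fps"
  assumes "k \<ge> 1"
  shows "fps_X ^ (2*k) / (1 - fps_X) * (psi oo fps_Y) = fps_X ^ (2*k-2) * ((fps_X * psi) oo fps_Y)"
proof -
  have Y: "fps_Y = fps_X ^ 2 * inverse (1 - fps_X :: 'a fps)"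
    by (simp add: fps_divide_unit)
  have "(fps_X :: 'a fps) ^ (2*k) = fps_X ^ (2*k-2) * fps_X ^ 2"
  proof -
    have "2*k = (2*k-2) + 2"
      using assms by simp
    then show ?thesis
      by (metis power_add)
  qed
  moreover have "fps_Y $ 0 = (0 :: 'a)"
    by (simp add: Y)
  ultimately show ?thesis
    by (simp add: fps_compose_mult_distrib fps_divide_unit mult_ac)
qed

lemma psi_transform_eq_rho_transform:
  fixes psi :: "'a::field_char_0 fps"
  assumes "k \<ge> 1"
  shows "psi_transform k psi = rho_transform k (fps_X * psi)"
  by (simp only: power_X_mult_compose_Y[OF assms])

lemma rho_transform_eq_psi_transform:
  fixes rho :: "'a::field_char_0 fps"
  assumes k: "k \<ge> 1"
  shows "rho_transform k rho = psi_transform k (fps_shift 1 rho)"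
proof -
  have "rho = fps_const (rho $ 0) + fps_X * fps_shift 1 rho"
    by (rule fps_ext) simp
  then have "fps_X ^ (2*k-2) * (rho oo fps_Y)
      = fps_X ^ (2*k-2) * fps_const (rho $ 0) + fps_X ^ (2*k) / (1 - fps_X) * (fps_shift 1 rho oo fps_Y)"
    using power_X_mult_compose_Y[OF k, of "fps_shift 1 rho"]
    by (metis distrib_left fps_compose_add_distrib fps_const_compose)
  then have "(fps_X ^ (2*k-2) * (rho oo fps_Y)) $ n
      = (fps_X ^ (2*k) / (1 - fps_X) * (fps_shift 1 rho oo fps_Y)) $ n" if "n \<ge> 2*k" for n
    using that k by (simp add: fps_X_power_mult_nth)
  then have "fps_diff_int (int (2*k) - 1) (fps_X ^ (2*k-2) * (rho oo fps_Y)) / fps_X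
      = fps_diff_int (int (2*k) - 1) (fps_X ^ (2*k) / (1 - fps_X) * (fps_shift 1 rho oo fps_Y)) / fps_X"
    by (rule fps_diff_int_div_X_cong)
  then show ?thesis
    by simp
qed

lemma psi_transform_iff_rho_transform:
  fixes phi :: "'a::field_char_0 fps"
  assumes "k \<ge> 1"
  shows "(\<exists>psi. phi = psi_transform k psi) \<longleftrightarrow> (\<exists>rho. phi = rho_transform k rho)"
  using psi_transform_eq_rho_transform[OF assms] rho_transform_eq_psi_transform[OF assms] by blast

theorem lemma4p3:
  fixes phi :: "'a::field_char_0 fps" and k :: nat
  shows "((\<forall>m::nat. m \<ge> 1 \<longrightarrow>
             (\<Sum>i=0..m. (-1)^i * of_nat ((2*m+2*k-1) choose (m-i))
                          * of_nat ((m+i) choose i) * fps_nth phi (m+i-1)) = 0)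
          \<longleftrightarrow>
          (\<exists>psi :: 'a fps. phi = fps_diff_int (2 * int k - 1)
              (fps_X ^ (2*k) / (1 - fps_X) * fps_compose psi (fps_X^2 / (1 - fps_X))) / fps_X))
       \<and> (k \<ge> 1 \<longrightarrow>
          ((\<exists>psi :: 'a fps. phi = fps_diff_int (2 * int k - 1)
              (fps_X ^ (2*k) / (1 - fps_X) * fps_compose psi (fps_X^2 / (1 - fps_X))) / fps_X)
           \<longleftrightarrow>
           (\<exists>rho :: 'a fps. phi = fps_diff_int (2 * int k - 1)
              (fps_X ^ (2*k-2) * fps_compose rho (fps_X^2 / (1 - fps_X))) / fps_X)))"
  using binomial_constraint_imp_psi_transform[of k phi] psi_transform_satisfies_constraint[of _ k]
    psi_transform_iff_rho_transform[of k phi]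
  by blast

end
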